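(* The map $\phi_{\mathcal{M}}:(m,f)\mapsto m\,\phi^1(f)$ is an injective morphism of set-operads from $\mathcal{MFF}=\mathrm{Mon}\times\mathcal{FF}$ to the set-operad underlying $\mathrm{Mould}_1$; it is also an injective morphism of symmetric set-operads between the symmetric versions.
   Context: $\mathrm{Mon}(n)$ is the set of monomials in $u_1,\dots,u_n$ (including $1$), with composition, for $F\in\mathrm{Mon}(m)$, $G\in\mathrm{Mon}(n)$: $F\circ_iG=F(u_1,\dots,u_{i-1},\Pi_{i,n},u_{i+n},\dots,u_{m+n-1})\,G(u_i,\dots,u_{i+n-1})$ where $\Pi_{i,n}=u_iu_{i+1}\cdots u_{i+n-1}$; $S_n$ acts by permuting variables. $\mathcal{FF}(n)$ is the set of reduced formal fractions whose numerator and denominator are products of symbols $[S]$, $\emptyset\ne S\subseteq[n]$, with $F\circ_iG=[S_{i,n}]\,F(1,\dots,i-1,S_{i,n},i+n,\dots,m+n-1)\,G(i,\dots,i+n-1)$, $S_{i,n}=\{i,\dots,i+n-1\}$, where $F(A_1,\dots,A_m)$ replaces each $[S]$ by $[\bigcup_{k\in S}A_k]$; $S_n$ acts by $[S]\mapsto[\sigma(S)]$. $\mathcal{MFF}$ is the Hadamard product: $\mathcal{MFF}(n)=\mathrm{Mon}(n)\times\mathcal{FF}(n)$ with componentwise composition and action. $\mathrm{Mould}_1(n)=\mathbb{Q}(u_1,\dots,u_n)$ with $F\circ_iG=(\Pi_{i,n}-1)F(u_1,\dots,u_{i-1},\Pi_{i,n},u_{i+n},\dots,u_{m+n-1})G(u_i,\dots,u_{i+n-1})$,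 $S_n$ permuting variables. $\phi^1$ sends $[S]$ to $\prod_{j\in S}u_j-1$, extended multiplicatively. *)

theory Defs
  imports Complex_Main "HOL-Library.Poly_Mapping" "HOL-Computational_Algebra.Fraction_Field"
          "HOL-Combinatorics.Permutations"
begin

text \<open>Polynomials over Q in the variables u_1, u_2, ... (index 0 unused),
  as finitely supported maps from exponent vectors to coefficients;
  rational functions are their fraction field.\<close>

type_synonym mpoly = "(nat \<Rightarrow>\<^sub>0 nat) \<Rightarrow>\<^sub>0 rat"
type_synonym ratfun = "mpoly fract"

definition Var :: "nat \<Rightarrow> mpoly" where
  "Var j = Poly_Mapping.single (Poly_Mapping.single j 1) 1"

definition mpoly_vars :: "mpoly \<Rightarrow> nat set" where
  "mpoly_vars p = \<Union> (Poly_Mapping.keys ` Poly_Mapping.keys p)"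

definition peval :: "(nat \<Rightarrow> mpoly) \<Rightarrow> mpoly \<Rightarrow> mpoly" where
  "peval \<sigma> p = (\<Sum>e\<in>Poly_Mapping.keys p. Poly_Mapping.single 0 (Poly_Mapping.lookup p e) * (\<Prod>j\<in>Poly_Mapping.keys e. \<sigma> j ^ Poly_Mapping.lookup e j))"

definition poly_to_rf :: "mpoly \<Rightarrow> ratfun" where
  "poly_to_rf p = Fract p 1"

text \<open>Substitution in a rational function (well defined for the injective
  monomial substitutions used below).\<close>
definition rsubst :: "(nat \<Rightarrow> mpoly) \<Rightarrow> ratfun \<Rightarrow> ratfun" where
  "rsubst \<sigma> x = (let (p, q) = (SOME (p, q). q \<noteq> 0 \<and> x = Fract p q)
                  in Fract (peval \<sigma> p) (peval \<sigma> q))"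

definition Mould1 :: "nat \<Rightarrow> ratfun set" where
  "Mould1 n = {x. \<exists>p q. q \<noteq> 0 \<and> mpoly_vars p \<subseteq> {1..n} \<and> mpoly_vars q \<subseteq> {1..n}
                        \<and> x = Fract p q}"

definition PiV :: "nat \<Rightarrow> nat \<Rightarrow> mpoly" where
  "PiV i n = (\<Prod>j\<in>{i..i+n-1}. Var j)"

definition mould_comp :: "nat \<Rightarrow> nat \<Rightarrow> ratfun \<Rightarrow> ratfun \<Rightarrow> ratfun" where
  "mould_comp i n F G =
     poly_to_rf (PiV i n - 1)
     * rsubst (\<lambda>j. if j < i then Var j else if j = i then PiV i n else Var (j + n - 1)) F
     * rsubst (\<lambda>k. Var (k + i - 1)) G"

definition mould_act :: "(nat \<Rightarrow> nat) \<Rightarrow> ratfun \<Rightarrow> ratfun" where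
  "mould_act \<sigma> F = rsubst (\<lambda>j. Var (\<sigma> j)) F"

definition mould_unit :: ratfun where
  "mould_unit = inverse (poly_to_rf (Var 1 - 1))"

text \<open>A monomial u_1^{e 1} ... u_n^{e n} is represented by its exponent function e.\<close>
definition Mon :: "nat \<Rightarrow> (nat \<Rightarrow> nat) set" where
  "Mon n = {e. \<forall>j. e j \<noteq> 0 \<longrightarrow> j \<in> {1..n}}"

definition mon_comp :: "nat \<Rightarrow> nat \<Rightarrow> (nat \<Rightarrow> nat) \<Rightarrow> (nat \<Rightarrow> nat) \<Rightarrow> (nat \<Rightarrow> nat)" where
  "mon_comp i n F G = (\<lambda>k. if k < i then F k
                           else if k < i + n then F i + G (k + 1 - i)
                           else F (k + 1 - n))"

definition mon_act :: "(nat \<Rightarrow> nat) \<Rightarrow> (nat \<Rightarrow> nat) \<Rightarrow> (nat \<Rightarrow> nat)" where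
  "mon_act \<sigma> e = (\<lambda>k. e (inv \<sigma> k))"

definition mon_unit :: "nat \<Rightarrow> nat" where
  "mon_unit = (\<lambda>_. 0)"

definition mon_to_rf :: "(nat \<Rightarrow> nat) \<Rightarrow> ratfun" where
  "mon_to_rf e = poly_to_rf (\<Prod>j\<in>{j. e j \<noteq> 0}. Var j ^ e j)"

text \<open>A reduced formal fraction prod_S [S]^{f S} is represented by its
  integer exponent function f, supported on nonempty subsets of [n].\<close>
definition FF :: "nat \<Rightarrow> (nat set \<Rightarrow> int) set" where
  "FF n = {f. \<forall>S. f S \<noteq> 0 \<longrightarrow> S \<noteq> {} \<and> S \<subseteq> {1..n}}"

definition ff_block :: "nat \<Rightarrow> nat \<Rightarrow> nat \<Rightarrow> nat set" where
  "ff_block i n k = (if k < i then {k} else if k = i then {i..i+n-1} else {k + n - 1})"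

definition ff_comp :: "nat \<Rightarrow> nat \<Rightarrow> nat \<Rightarrow> (nat set \<Rightarrow> int) \<Rightarrow> (nat set \<Rightarrow> int) \<Rightarrow> (nat set \<Rightarrow> int)" where
  "ff_comp m i n F G = (\<lambda>T.
      (if T = {i..i+n-1} then 1 else 0)
      + (\<Sum>S\<in>{S. S \<subseteq> {1..m} \<and> (\<Union>k\<in>S. ff_block i n k) = T}. F S)
      + (\<Sum>S\<in>{S. S \<subseteq> {1..n} \<and> (\<lambda>k. k + i - 1) ` S = T}. G S))"

definition ff_act :: "(nat \<Rightarrow> nat) \<Rightarrow> (nat set \<Rightarrow> int) \<Rightarrow> (nat set \<Rightarrow> int)" where
  "ff_act \<sigma> f = (\<lambda>T. f (inv \<sigma> ` T))"

definition ff_unit :: "nat set \<Rightarrow> int" where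
  "ff_unit = (\<lambda>S. if S = {1} then -1 else 0)"

definition phi1 :: "(nat set \<Rightarrow> int) \<Rightarrow> ratfun" where
  "phi1 f = (\<Prod>S\<in>{S. f S \<noteq> 0}. poly_to_rf ((\<Prod>j\<in>S. Var j) - 1) powi f S)"

type_synonym mff = "(nat \<Rightarrow> nat) \<times> (nat set \<Rightarrow> int)"

definition MFF :: "nat \<Rightarrow> mff set" where
  "MFF n = Mon n \<times> FF n"

definition mff_comp :: "nat \<Rightarrow> nat \<Rightarrow> nat \<Rightarrow> mff \<Rightarrow> mff \<Rightarrow> mff" where
  "mff_comp m i n x y = (mon_comp i n (fst x) (fst y), ff_comp m i n (snd x) (snd y))"

definition mff_act :: "(nat \<Rightarrow> nat) \<Rightarrow> mff \<Rightarrow> mff" where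
  "mff_act \<sigma> x = (mon_act \<sigma> (fst x), ff_act \<sigma> (snd x))"

definition mff_unit :: mff where
  "mff_unit = (mon_unit, ff_unit)"

definition phiM :: "mff \<Rightarrow> ratfun" where
  "phiM x = mon_to_rf (fst x) * phi1 (snd x)"

end

theory Submission
  imports Defs "HOL-Library.Nat_Bijection" "HOL-Computational_Algebra.Polynomial"
begin

(* Everything is reduced to two kinds of polynomial substitutions.  A "block substitution"
   sends u_j to the product of the variables in a set blk j, where the blocks are nonempty,
   finite and pairwise disjoint.  The substitutions in the partial composition of Mould_1
   (u_i to Pi_{i,n}, the shift u_k to u_{k+i-1}) and in the symmetric group action are of this
   kind.  Such a substitution has a left inverse, hence is injective on polynomials and
   induces a multiplicative map on rational functions; it sends the monomial phi(m) to the
   monomial with relocated exponents, and phi^1([S]) = prod_{j in S} u_j - 1 to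
   phi^1([union of the blocks of S]).  This is exactly how composition and the action of
   MFF are defined, so phi_M is a morphism.  Membership in Mould_1(n) is a closure argument.

   Injectivity: specialise u_{j0} to a variable x and the other u_j to constants 2^(2^j);
   then [T] becomes a linear polynomial vanishing at a point that determines T if j0 : T,
   and a nonzero constant otherwise.  Comparing root multiplicities recovers the exponents
   of the formal fraction, and then the monomials themselves are equal. *)

section \<open>Evaluation of multivariate polynomials\<close>

text \<open>This covers both
  substitution of polynomials for variables and specialisation to univariate polynomials.\<close>

definition rat_hom :: "(rat \<Rightarrow> 'a::comm_ring_1) \<Rightarrow> bool" where
  "rat_hom h \<longleftrightarrow> h 0 = 0 \<and> h 1 = 1 \<and> (\<forall>a b. h (a + b) = h a + h b) \<and> (\<forall>a b. h (a * b) = h a * h b)"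

definition gmonom :: "(nat \<Rightarrow> 'a::comm_ring_1) \<Rightarrow> (nat \<Rightarrow>\<^sub>0 nat) \<Rightarrow> 'a" where
  "gmonom \<sigma> e = (\<Prod>j\<in>Poly_Mapping.keys e. \<sigma> j ^ Poly_Mapping.lookup e j)"

definition geval :: "(rat \<Rightarrow> 'a::comm_ring_1) \<Rightarrow> (nat \<Rightarrow> 'a) \<Rightarrow> mpoly \<Rightarrow> 'a" where
  "geval h \<sigma> p = (\<Sum>e\<in>Poly_Mapping.keys p. h (Poly_Mapping.lookup p e) * gmonom \<sigma> e)"

lemma peval_geval: "peval \<sigma> p = geval (Poly_Mapping.single 0) \<sigma> p"
  unfolding peval_def geval_def gmonom_def ..

lemma rat_hom_const_mpoly: "rat_hom (Poly_Mapping.single 0 :: rat \<Rightarrow> mpoly)"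
  unfolding rat_hom_def by (simp add: single_add mult_single)

lemma rat_hom_const_poly: "rat_hom (\<lambda>c::rat. [:c:])"
  unfolding rat_hom_def by simp

lemma gmonom_superset:
  assumes "finite B" "Poly_Mapping.keys e \<subseteq> B"
  shows "gmonom \<sigma> e = (\<Prod>j\<in>B. \<sigma> j ^ Poly_Mapping.lookup e j)"
  unfolding gmonom_def by (rule prod.mono_neutral_left) (use assms in \<open>auto simp: in_keys_iff\<close>)

lemma gmonom_add: "gmonom \<sigma> (a + b) = gmonom \<sigma> a * gmonom \<sigma> b"
proof -
  let ?B = "Poly_Mapping.keys a \<union> Poly_Mapping.keys b"
  have "gmonom \<sigma> (a + b) = (\<Prod>j\<in>?B. \<sigma> j ^ Poly_Mapping.lookup (a + b) j)"
    by (rule gmonom_superset) (auto dest: keys_add[THEN subsetD])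
  also have "\<dots> = (\<Prod>j\<in>?B. \<sigma> j ^ Poly_Mapping.lookup a j) * (\<Prod>j\<in>?B. \<sigma> j ^ Poly_Mapping.lookup b j)"
    by (simp add: lookup_add power_add prod.distrib)
  also have "\<dots> = gmonom \<sigma> a * gmonom \<sigma> b"
    by (simp add: gmonom_superset[where B = ?B])
  finally show ?thesis .
qed

lemma poly_mapping_sum_terms:
  "p = (\<Sum>e\<in>Poly_Mapping.keys (p :: 'b \<Rightarrow>\<^sub>0 'c::comm_monoid_add). Poly_Mapping.single e (Poly_Mapping.lookup p e))"
  by (rule poly_mapping_eqI)
     (auto simp: lookup_sum lookup_single when_def in_keys_iff split: if_splits
           intro!: trans[OF _ sum.delta[of "Poly_Mapping.keys p" _ "Poly_Mapping.lookup p", symmetric]])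

context
  fixes h :: "rat \<Rightarrow> 'a::comm_ring_1"
  assumes h: "rat_hom h"
begin

lemma rat_hom_0 [simp]: "h 0 = 0" and rat_hom_1 [simp]: "h 1 = 1"
  and rat_hom_add: "h (a + b) = h a + h b" and rat_hom_mult: "h (a * b) = h a * h b"
  using h unfolding rat_hom_def by auto

lemma geval_superset:
  assumes "finite A" "Poly_Mapping.keys p \<subseteq> A"
  shows "geval h \<sigma> p = (\<Sum>e\<in>A. h (Poly_Mapping.lookup p e) * gmonom \<sigma> e)"
  unfolding geval_def by (rule sum.mono_neutral_left) (use assms in \<open>auto simp: in_keys_iff\<close>)

lemma geval_add: "geval h \<sigma> (p + q) = geval h \<sigma> p + geval h \<sigma> q"
proof -
  let ?A = "Poly_Mapping.keys p \<union> Poly_Mapping.keys q"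
  have "geval h \<sigma> (p + q) = (\<Sum>e\<in>?A. h (Poly_Mapping.lookup (p + q) e) * gmonom \<sigma> e)"
    by (rule geval_superset) (auto dest: keys_add[THEN subsetD])
  also have "\<dots> = (\<Sum>e\<in>?A. h (Poly_Mapping.lookup p e) * gmonom \<sigma> e)
                + (\<Sum>e\<in>?A. h (Poly_Mapping.lookup q e) * gmonom \<sigma> e)"
    by (simp add: lookup_add rat_hom_add distrib_right sum.distrib)
  also have "\<dots> = geval h \<sigma> p + geval h \<sigma> q"
    by (simp add: geval_superset[where A = ?A])
  finally show ?thesis .
qed

lemma geval_zero [simp]: "geval h \<sigma> 0 = 0"
  by (simp add: geval_def)

lemma geval_sum: "geval h \<sigma> (sum f A) = (\<Sum>x\<in>A. geval h \<sigma> (f x))"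
  by (induction A rule: infinite_finite_induct) (auto simp: geval_add)

lemma geval_single: "geval h \<sigma> (Poly_Mapping.single e c) = h c * gmonom \<sigma> e"
  using geval_superset[of "{e}" "Poly_Mapping.single e c" \<sigma>] by simp

lemma geval_mult: "geval h \<sigma> (p * q) = geval h \<sigma> p * geval h \<sigma> q"
proof -
  let ?Kp = "Poly_Mapping.keys p" and ?Kq = "Poly_Mapping.keys q"
  have "p * q = (\<Sum>a\<in>?Kp. Poly_Mapping.single a (Poly_Mapping.lookup p a))
              * (\<Sum>b\<in>?Kq. Poly_Mapping.single b (Poly_Mapping.lookup q b))"
    by (simp only: poly_mapping_sum_terms[symmetric])
  also have "\<dots> = (\<Sum>a\<in>?Kp. \<Sum>b\<in>?Kq. Poly_Mapping.single (a + b) (Poly_Mapping.lookup p a * Poly_Mapping.lookup q b))"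
    by (simp add: sum_product mult_single)
  finally have "geval h \<sigma> (p * q) = (\<Sum>a\<in>?Kp. \<Sum>b\<in>?Kq.
      (h (Poly_Mapping.lookup p a) * gmonom \<sigma> a) * (h (Poly_Mapping.lookup q b) * gmonom \<sigma> b))"
    by (simp add: geval_sum geval_single rat_hom_mult gmonom_add algebra_simps)
  also have "\<dots> = geval h \<sigma> p * geval h \<sigma> q"
    by (simp add: geval_def sum_product)
  finally show ?thesis .
qed

lemma geval_one [simp]: "geval h \<sigma> 1 = 1"
  using geval_single[where e = 0 and c = 1] by (simp add: gmonom_def)

lemma geval_diff: "geval h \<sigma> (p - q) = geval h \<sigma> p - geval h \<sigma> q"
  using geval_add[where p = "p - q" and q = q] by (simp add: algebra_simps)

lemma geval_power: "geval h \<sigma> (p ^ k) = geval h \<sigma> p ^ k"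
  by (induction k) (auto simp: geval_mult)

lemma geval_prod: "geval h \<sigma> (prod f A) = (\<Prod>x\<in>A. geval h \<sigma> (f x))"
  by (induction A rule: infinite_finite_induct) (auto simp: geval_mult)

lemma geval_Var [simp]: "geval h \<sigma> (Var j) = \<sigma> j"
  by (simp add: Var_def geval_single gmonom_def)

lemma geval_peval: "geval h \<tau> (peval \<sigma> p) = geval h (\<lambda>j. geval h \<tau> (\<sigma> j)) p"
proof -
  have "geval h \<tau> (peval \<sigma> p) = (\<Sum>e\<in>Poly_Mapping.keys p. h (Poly_Mapping.lookup p e)
           * (\<Prod>j\<in>Poly_Mapping.keys e. geval h \<tau> (\<sigma> j) ^ Poly_Mapping.lookup e j))"
    by (simp add: peval_def geval_sum geval_mult geval_single gmonom_def geval_prod geval_power)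
  then show ?thesis
    by (simp only: geval_def[where \<sigma> = "\<lambda>j. geval h \<tau> (\<sigma> j)"] gmonom_def)
qed

end

lemmas peval_mult = geval_mult[OF rat_hom_const_mpoly, folded peval_geval]
  and peval_zero [simp] = geval_zero[OF rat_hom_const_mpoly, folded peval_geval]
  and peval_one [simp] = geval_one[OF rat_hom_const_mpoly, folded peval_geval]
  and peval_diff = geval_diff[OF rat_hom_const_mpoly, folded peval_geval]
  and peval_power = geval_power[OF rat_hom_const_mpoly, folded peval_geval]
  and peval_prod = geval_prod[OF rat_hom_const_mpoly, folded peval_geval]
  and peval_Var [simp] = geval_Var[OF rat_hom_const_mpoly, folded peval_geval]
  and peval_peval = geval_peval[OF rat_hom_const_mpoly, folded peval_geval]

lemma Var_power: "Var j ^ k = Poly_Mapping.single (Poly_Mapping.single j k) 1"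
  by (induction k) (auto simp: Var_def mult_single single_add[symmetric] add.commute)

lemma prod_single_one:
  "(\<Prod>x\<in>A. Poly_Mapping.single (f x) (1::rat)) = Poly_Mapping.single (\<Sum>x\<in>A. f x) 1"
  by (induction A rule: infinite_finite_induct) (auto simp: mult_single)

lemma peval_Var_id: "peval Var p = p"
proof -
  have monom: "gmonom Var e = Poly_Mapping.single e 1" for e
    by (simp add: gmonom_def Var_power prod_single_one poly_mapping_sum_terms[symmetric])
  show ?thesis
    unfolding peval_geval geval_def monom mult_single by (simp, rule poly_mapping_sum_terms[symmetric])
qed

section \<open>Substitution in rational functions\<close>

text \<open>A substitution is faithful if it sends nonzero polynomials to nonzero polynomials;
  only then is substitution in fractions independent of the chosen representation of a fraction.\<close>

definition faithful :: "(nat \<Rightarrow> mpoly) \<Rightarrow> bool" where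
  "faithful \<sigma> \<longleftrightarrow> (\<forall>q. q \<noteq> 0 \<longrightarrow> peval \<sigma> q \<noteq> 0)"

lemma faithful_by_left_inverse:
  assumes "(\<lambda>j. peval \<tau> (\<sigma> j)) = Var"
  shows "faithful \<sigma>"
  unfolding faithful_def
proof (intro allI impI notI)
  fix q :: mpoly
  assume "q \<noteq> 0" "peval \<sigma> q = 0"
  then have "peval \<tau> (peval \<sigma> q) = 0" by simp
  then show False using \<open>q \<noteq> 0\<close> by (simp add: peval_peval assms peval_Var_id)
qed

lemma rsubst_Fract:
  assumes \<sigma>: "faithful \<sigma>" and "q \<noteq> 0"
  shows "rsubst \<sigma> (Fract p q) = Fract (peval \<sigma> p) (peval \<sigma> q)"
proof -
  let ?P = "\<lambda>(p', q'). q' \<noteq> 0 \<and> Fract p q = Fract p' q'"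
  have "?P (SOME pq. ?P pq)"
    by (rule someI[of ?P "(p, q)"]) (use assms in auto)
  then obtain p' q' where pq: "(SOME pq. ?P pq) = (p', q')" "q' \<noteq> 0" "Fract p q = Fract p' q'"
    by (cases "SOME pq. ?P pq") auto
  have "p * q' = p' * q" using pq \<open>q \<noteq> 0\<close> eq_fract(1) by blast
  then have "peval \<sigma> p * peval \<sigma> q' = peval \<sigma> p' * peval \<sigma> q" by (metis peval_mult)
  moreover have "peval \<sigma> q \<noteq> 0" "peval \<sigma> q' \<noteq> 0"
    using \<sigma> \<open>q \<noteq> 0\<close> pq(2) unfolding faithful_def by auto
  ultimately have "Fract (peval \<sigma> p') (peval \<sigma> q') = Fract (peval \<sigma> p) (peval \<sigma> q)"
    by (simp add: eq_fract)
  then show ?thesis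
    using pq(1) unfolding rsubst_def by (simp add: eq_commute[of "Fract p q"])
qed

context
  fixes \<sigma> :: "nat \<Rightarrow> mpoly"
  assumes \<sigma>: "faithful \<sigma>"
begin

lemma rsubst_poly: "rsubst \<sigma> (poly_to_rf p) = poly_to_rf (peval \<sigma> p)"
  by (simp add: poly_to_rf_def rsubst_Fract[OF \<sigma>])

lemma rsubst_mult: "rsubst \<sigma> (x * y) = rsubst \<sigma> x * rsubst \<sigma> y"
  by (cases x; cases y) (simp add: rsubst_Fract[OF \<sigma>] peval_mult)

lemma rsubst_one: "rsubst \<sigma> 1 = 1"
  by (simp add: One_fract_def rsubst_Fract[OF \<sigma>])

lemma rsubst_inverse: "rsubst \<sigma> (inverse x) = inverse (rsubst \<sigma> x)"
proof (cases x)
  case (Fract a b)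
  then show ?thesis
    by (cases "a = 0") (simp_all add: rsubst_Fract[OF \<sigma>] eq_fract(2))
qed

lemma rsubst_powi: "rsubst \<sigma> (x powi k) = rsubst \<sigma> x powi k"
proof -
  have "rsubst \<sigma> (x ^ k) = rsubst \<sigma> x ^ k" for x k
    by (induction k) (simp_all add: rsubst_mult rsubst_one)
  then show ?thesis by (simp add: power_int_def rsubst_inverse)
qed

lemma rsubst_prod: "rsubst \<sigma> (prod f A) = (\<Prod>x\<in>A. rsubst \<sigma> (f x))"
  by (induction A rule: infinite_finite_induct) (simp_all add: rsubst_mult rsubst_one)

end

lemma poly_to_rf_mult: "poly_to_rf (p * q) = poly_to_rf p * poly_to_rf q"
  by (simp add: poly_to_rf_def)

text \<open>var_prod T is the product of the variables indexed by T, bracket T is the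
  image var_prod T - 1 of the symbol [T] under phi^1, and mon_poly e A is the monomial
  with exponents e on the variables in A.\<close>

definition var_prod :: "nat set \<Rightarrow> mpoly" where
  "var_prod T = (\<Prod>j\<in>T. Var j)"

definition bracket :: "nat set \<Rightarrow> ratfun" where
  "bracket T = poly_to_rf (var_prod T - 1)"

definition mon_poly :: "(nat \<Rightarrow> nat) \<Rightarrow> nat set \<Rightarrow> mpoly" where
  "mon_poly e A = (\<Prod>j\<in>A. Var j ^ e j)"

lemma var_prod_singleton [simp]: "var_prod {j} = Var j"
  by (simp add: var_prod_def)

lemma var_prod_eq_single: "var_prod T = Poly_Mapping.single (\<Sum>j\<in>T. Poly_Mapping.single j 1) 1"
  by (simp add: var_prod_def Var_def prod_single_one)

lemma mon_poly_eq_single: "mon_poly e A = Poly_Mapping.single (\<Sum>j\<in>A. Poly_Mapping.single j (e j)) 1"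
  by (simp add: mon_poly_def Var_power prod_single_one)

lemma mon_poly_add: "mon_poly (\<lambda>k. a k + b k) A = mon_poly a A * mon_poly b A"
  by (simp add: mon_poly_def power_add prod.distrib)

lemma peval_var_prod: "peval \<sigma> (var_prod T) = (\<Prod>j\<in>T. \<sigma> j)"
  by (simp add: var_prod_def peval_prod)

lemma peval_mon_poly: "peval \<sigma> (mon_poly e A) = (\<Prod>j\<in>A. \<sigma> j ^ e j)"
  by (simp add: mon_poly_def peval_prod peval_power)

lemma var_prod_neq_one:
  assumes "finite T" "T \<noteq> {}"
  shows "var_prod T \<noteq> 1"
proof
  assume one: "var_prod T = 1"
  let ?e = "\<Sum>j\<in>T. Poly_Mapping.single j (1::nat)"
  have "Poly_Mapping.lookup (var_prod T) ?e = 1"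
    by (simp add: var_prod_eq_single)
  then have "?e = 0"
    using one by (simp add: lookup_one when_def split: if_splits)
  moreover obtain j where "j \<in> T" using assms by auto
  then have "Poly_Mapping.lookup ?e j = 1"
    using assms by (simp add: lookup_sum lookup_single when_def)
  ultimately show False by simp
qed

lemma bracket_nonzero: "finite T \<Longrightarrow> T \<noteq> {} \<Longrightarrow> bracket T \<noteq> 0"
  using var_prod_neq_one by (simp add: bracket_def poly_to_rf_def Zero_fract_def eq_fract)

lemma phi1_superset:
  "finite A \<Longrightarrow> {S. f S \<noteq> 0} \<subseteq> A \<Longrightarrow> phi1 f = (\<Prod>S\<in>A. bracket S powi f S)"
  unfolding phi1_def bracket_def var_prod_def by (rule prod.mono_neutral_left) auto

lemma mon_to_rf_superset:
  "finite A \<Longrightarrow> {j. e j \<noteq> 0} \<subseteq> A \<Longrightarrow> mon_to_rf e = poly_to_rf (mon_poly e A)"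
  unfolding mon_to_rf_def mon_poly_def
  by (rule arg_cong[where f = poly_to_rf], rule prod.mono_neutral_left) auto

definition finitary :: "(nat set \<Rightarrow> int) \<Rightarrow> bool" where
  "finitary f \<longleftrightarrow> finite {S. f S \<noteq> 0} \<and> (\<forall>S. f S \<noteq> 0 \<longrightarrow> finite S \<and> S \<noteq> {})"

lemma FF_support: "f \<in> FF n \<Longrightarrow> f S \<noteq> 0 \<Longrightarrow> S \<noteq> {} \<and> S \<subseteq> {1..n}"
  by (auto simp: FF_def)

lemma FF_finite_support: "f \<in> FF n \<Longrightarrow> finite {S. f S \<noteq> 0}"
  by (rule finite_subset[of _ "Pow {1..n}"]) (auto simp: FF_def)

lemma FF_finitary: "f \<in> FF n \<Longrightarrow> finitary f"
  unfolding finitary_def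
  using FF_finite_support[of f n] FF_support[of f n] finite_subset[of _ "{1..n}"] by auto

lemma finitary_add:
  assumes "finitary f" "finitary g"
  shows "finitary (\<lambda>T. f T + g T)"
proof -
  have supp: "{S. f S + g S \<noteq> 0} \<subseteq> {S. f S \<noteq> 0} \<union> {S. g S \<noteq> 0}"
    by auto
  then have "finite {S. f S + g S \<noteq> 0}"
    using assms unfolding finitary_def by (meson finite_Un finite_subset)
  moreover have "finite S \<and> S \<noteq> {}" if "f S + g S \<noteq> 0" for S
    using assms supp that unfolding finitary_def by blast
  ultimately show ?thesis
    unfolding finitary_def by blast
qed

lemma phi1_add:
  assumes "finitary f" "finitary g"
  shows "phi1 (\<lambda>T. f T + g T) = phi1 f * phi1 g"
proof -
  let ?A = "{S. f S \<noteq> 0} \<union> {S. g S \<noteq> 0}"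
  have A: "finite ?A" and nonzero: "\<And>T. T \<in> ?A \<Longrightarrow> bracket T \<noteq> 0"
    using assms bracket_nonzero unfolding finitary_def by auto
  have "phi1 (\<lambda>T. f T + g T) = (\<Prod>T\<in>?A. bracket T powi (f T + g T))"
    by (rule phi1_superset[OF A]) auto
  also have "\<dots> = (\<Prod>T\<in>?A. bracket T powi f T) * (\<Prod>T\<in>?A. bracket T powi g T)"
    by (simp add: power_int_add nonzero prod.distrib[symmetric])
  also have "\<dots> = phi1 f * phi1 g"
    by (simp add: phi1_superset[OF A])
  finally show ?thesis .
qed

section \<open>Block substitutions\<close>

text \<open>Composition and the symmetric action are both of this form.\<close>

definition block_subst :: "(nat \<Rightarrow> nat set) \<Rightarrow> nat \<Rightarrow> mpoly" where
  "block_subst blk j = var_prod (blk j)"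

definition block_union :: "(nat \<Rightarrow> nat set) \<Rightarrow> nat set \<Rightarrow> nat set" where
  "block_union blk S = (\<Union>j\<in>S. blk j)"

definition disjoint_blocks :: "(nat \<Rightarrow> nat set) \<Rightarrow> bool" where
  "disjoint_blocks blk \<longleftrightarrow>
     (\<forall>j. finite (blk j) \<and> blk j \<noteq> {}) \<and> (\<forall>j j'. j \<noteq> j' \<longrightarrow> blk j \<inter> blk j' = {})"

definition ff_push :: "(nat set \<Rightarrow> bool) \<Rightarrow> (nat set \<Rightarrow> nat set) \<Rightarrow> (nat set \<Rightarrow> int) \<Rightarrow> nat set \<Rightarrow> int" where
  "ff_push P \<Phi> f T = (\<Sum>S | P S \<and> \<Phi> S = T. f S)"

lemma ff_push_support: "{T. ff_push P \<Phi> f T \<noteq> 0} \<subseteq> \<Phi> ` {S. f S \<noteq> 0}"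
  unfolding ff_push_def by (auto dest: sum.not_neutral_contains_not_neutral)

lemma ff_push_inj: "inj \<Phi> \<Longrightarrow> P S \<Longrightarrow> ff_push P \<Phi> f (\<Phi> S) = f S"
proof -
  assume "inj \<Phi>" "P S"
  then have "{S'. P S' \<and> \<Phi> S' = \<Phi> S} = {S}" by (auto dest: injD)
  then show ?thesis by (simp add: ff_push_def)
qed

context
  fixes blk :: "nat \<Rightarrow> nat set"
  assumes blk: "disjoint_blocks blk"
begin

lemma block_finite: "finite (blk j)" and block_nonempty: "blk j \<noteq> {}"
  and block_disjoint: "j \<noteq> j' \<Longrightarrow> blk j \<inter> blk j' = {}"
  using blk unfolding disjoint_blocks_def by auto

text \<open>Sending one chosen element of each block back to its index and all other variables
  to 1 is a left inverse, so block substitutions are faithful.\<close>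
lemma faithful_block_subst: "faithful (block_subst blk)"
proof -
  define rep where "rep j = (SOME k. k \<in> blk j)" for j
  have rep: "rep j \<in> blk j" for j
    unfolding rep_def using block_nonempty[of j] by (auto intro: someI)
  have inj_rep: "inj rep"
    by (rule injI) (metis rep block_disjoint disjoint_iff)
  define \<tau> where "\<tau> k = (if k \<in> range rep then Var (inv rep k) else 1)" for k
  have "peval \<tau> (block_subst blk j) = Var j" for j
  proof -
    have others: "\<tau> k = 1" if k: "k \<in> blk j - {rep j}" for k
    proof -
      have "k \<notin> range rep"
      proof
        assume "k \<in> range rep"
        then obtain x where "k = rep x" by blast
        with rep[of x] k block_disjoint[of x j] show False by auto
      qed
      then show ?thesis by (simp add: \<tau>_def)
    qed
    have "peval \<tau> (block_subst blk j) = \<tau> (rep j) * (\<Prod>k\<in>blk j - {rep j}. \<tau> k)"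
      by (simp only: block_subst_def peval_var_prod prod.remove[OF block_finite rep])
    also have "\<dots> = \<tau> (rep j)"
      by (simp add: others)
    also have "\<dots> = Var j"
      by (simp add: \<tau>_def inv_f_f[OF inj_rep])
    finally show ?thesis .
  qed
  then show ?thesis by (intro faithful_by_left_inverse[where \<tau> = \<tau>]) auto
qed

lemma inj_block_union: "inj (block_union blk)"
proof (rule injI)
  fix S S' assume eq: "block_union blk S = block_union blk S'"
  have member: "j \<in> X \<longleftrightarrow> blk j \<inter> block_union blk X \<noteq> {}" for j X
  proof
    assume "j \<in> X"
    then show "blk j \<inter> block_union blk X \<noteq> {}"
      using block_nonempty[of j] by (auto simp: block_union_def)
  next
    assume "blk j \<inter> block_union blk X \<noteq> {}"
    then obtain j' where "j' \<in> X" "blk j \<inter> blk j' \<noteq> {}"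
      by (auto simp: block_union_def)
    then show "j \<in> X" using block_disjoint[of j j'] by auto
  qed
  show "S = S'"
    by (rule set_eqI) (simp only: member eq)
qed

lemma peval_block_var_prod:
  assumes "finite S"
  shows "peval (block_subst blk) (var_prod S) = var_prod (block_union blk S)"
proof -
  have "peval (block_subst blk) (var_prod S) = (\<Prod>j\<in>S. \<Prod>k\<in>blk j. Var k)"
    unfolding peval_var_prod block_subst_def by (simp add: var_prod_def)
  also have "\<dots> = var_prod (block_union blk S)"
    unfolding var_prod_def block_union_def
    by (rule prod.UNION_disjoint[symmetric]) (use assms block_finite block_disjoint in auto)
  finally show ?thesis .
qed

lemma peval_block_mon_poly:
  assumes "finite A" and exps: "\<And>j k. j \<in> A \<Longrightarrow> k \<in> blk j \<Longrightarrow> c k = e j"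
  shows "peval (block_subst blk) (mon_poly e A) = mon_poly c (block_union blk A)"
proof -
  have "peval (block_subst blk) (mon_poly e A) = (\<Prod>j\<in>A. \<Prod>k\<in>blk j. Var k ^ e j)"
    by (simp add: peval_mon_poly block_subst_def var_prod_def prod_power_distrib)
  also have "\<dots> = (\<Prod>j\<in>A. \<Prod>k\<in>blk j. Var k ^ c k)"
    by (intro prod.cong refl) (simp add: exps)
  also have "\<dots> = mon_poly c (block_union blk A)"
    unfolding mon_poly_def block_union_def
    by (rule prod.UNION_disjoint[symmetric]) (use assms block_finite block_disjoint in auto)
  finally show ?thesis .
qed

lemma finitary_ff_push:
  assumes f: "finitary f"
  shows "finitary (ff_push P (block_union blk) f)"
proof -
  let ?push = "ff_push P (block_union blk) f"
  have supp: "{T. ?push T \<noteq> 0} \<subseteq> block_union blk ` {S. f S \<noteq> 0}"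
    by (rule ff_push_support)
  have "finite (block_union blk S) \<and> block_union blk S \<noteq> {}" if "f S \<noteq> 0" for S
    using f that block_finite block_nonempty by (auto simp: finitary_def block_union_def)
  moreover have "T \<in> block_union blk ` {S. f S \<noteq> 0}" if "?push T \<noteq> 0" for T
    using that supp by blast
  ultimately have "finite T \<and> T \<noteq> {}" if "?push T \<noteq> 0" for T
    using that by blast
  moreover have "finite {T. ?push T \<noteq> 0}"
    using f supp by (auto simp: finitary_def intro: finite_subset)
  ultimately show ?thesis unfolding finitary_def by blast
qed

lemma rsubst_block_phi1:
  assumes f: "finitary f" and P: "\<And>S. f S \<noteq> 0 \<Longrightarrow> P S"
  shows "rsubst (block_subst blk) (phi1 f) = phi1 (ff_push P (block_union blk) f)"
proof -
  let ?supp = "{S. f S \<noteq> 0}" and ?\<Phi> = "block_union blk"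
  have fin: "finite ?supp" and fin_sets: "\<And>S. S \<in> ?supp \<Longrightarrow> finite S"
    using f unfolding finitary_def by auto
  have "rsubst (block_subst blk) (phi1 f) = (\<Prod>S\<in>?supp. bracket (?\<Phi> S) powi f S)"
    by (simp add: phi1_superset[OF fin] rsubst_prod rsubst_powi faithful_block_subst
        bracket_def rsubst_poly peval_diff peval_block_var_prod fin_sets)
  also have "\<dots> = (\<Prod>T\<in>?\<Phi> ` ?supp. bracket T powi ff_push P ?\<Phi> f T)"
    by (simp add: prod.reindex inj_on_subset[OF inj_block_union] ff_push_inj[OF inj_block_union] P)
  also have "\<dots> = phi1 (ff_push P ?\<Phi> f)"
    by (rule phi1_superset[symmetric]) (use fin ff_push_support in auto)
  finally show ?thesis .
qed

end

section \<open>phi_M respects units, composition and the symmetric action\<close>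

lemma mon_to_rf_Mon: "e \<in> Mon n \<Longrightarrow> mon_to_rf e = poly_to_rf (mon_poly e {1..n})"
  by (rule mon_to_rf_superset) (auto simp: Mon_def)

lemma phiM_unit: "phiM mff_unit = mould_unit"
proof -
  have "{S. ff_unit S \<noteq> 0} = {{1}}" by (auto simp: ff_unit_def)
  then have "phi1 ff_unit = inverse (poly_to_rf (Var 1 - 1))"
    by (simp add: phi1_def ff_unit_def power_int_minus)
  moreover have "mon_to_rf mon_unit = 1"
    by (simp add: mon_to_rf_def mon_unit_def poly_to_rf_def One_fract_def)
  ultimately show ?thesis by (simp add: phiM_def mff_unit_def mould_unit_def)
qed

lemma disjoint_blocks_singletons: "inj g \<Longrightarrow> disjoint_blocks (\<lambda>k. {g k})"
  by (auto simp: disjoint_blocks_def dest: injD)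

lemma block_union_singletons: "block_union (\<lambda>k. {g k}) S = g ` S"
  by (auto simp: block_union_def)

abbreviation shift_blocks :: "nat \<Rightarrow> nat \<Rightarrow> nat set" where
  "shift_blocks i k \<equiv> {k + i - 1}"

lemma mould_comp_block_subst:
  "mould_comp i n F G = bracket {i..i+n-1} * rsubst (block_subst (ff_block i n)) F
                         * rsubst (block_subst (shift_blocks i)) G"
proof -
  have "(\<lambda>j. if j < i then Var j else if j = i then PiV i n else Var (j + n - 1))
        = block_subst (ff_block i n)"
    by (auto simp: fun_eq_iff block_subst_def ff_block_def PiV_def var_prod_def)
  moreover have "(\<lambda>k. Var (k + i - 1)) = block_subst (shift_blocks i)"
    by (simp add: fun_eq_iff block_subst_def)
  ultimately show ?thesis
    by (simp add: mould_comp_def bracket_def var_prod_def PiV_def)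
qed

lemma mould_act_block_subst: "mould_act \<sigma> F = rsubst (block_subst (\<lambda>j. {\<sigma> j})) F"
  unfolding mould_act_def block_subst_def[abs_def] by simp

context
  fixes m n i :: nat
  assumes n: "1 \<le> n" and i: "1 \<le> i" and im: "i \<le> m"
begin

lemma disjoint_ff_block: "disjoint_blocks (ff_block i n)"
  using n by (auto simp: disjoint_blocks_def ff_block_def)

lemma disjoint_shift_blocks: "disjoint_blocks (shift_blocks i)"
  using i by (intro disjoint_blocks_singletons injI) auto

lemma block_union_ff_block: "block_union (ff_block i n) {1..m} = {1..m+n-1}"
proof -
  have "k \<in> block_union (ff_block i n) {1..m}" if "k \<in> {1..m+n-1}" for k
  proof -
    consider "k < i" | "i \<le> k" "k < i + n" | "i + n \<le> k" by linarith
    then show ?thesis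
    proof cases
      case 1 then show ?thesis using that im by (auto simp: block_union_def ff_block_def)
    next
      case 2 then show ?thesis using that i im
        by (auto simp: block_union_def ff_block_def intro!: bexI[of _ i])
    next
      case 3 then show ?thesis using that n
        by (auto simp: block_union_def ff_block_def intro!: bexI[of _ "k + 1 - n"])
    qed
  qed
  moreover have "block_union (ff_block i n) {1..m} \<subseteq> {1..m+n-1}"
    using n i im by (auto simp: block_union_def ff_block_def split: if_splits)
  ultimately show ?thesis by blast
qed

lemma block_union_shift_blocks: "block_union (shift_blocks i) {1..n} = {i..i+n-1}"
proof (rule set_eqI)
  fix k
  show "k \<in> block_union (shift_blocks i) {1..n} \<longleftrightarrow> k \<in> {i..i+n-1}"
    using i n by (auto simp: block_union_def intro!: bexI[of _ "k + 1 - i"])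
qed

definition outer_exps :: "(nat \<Rightarrow> nat) \<Rightarrow> nat \<Rightarrow> nat" where
  "outer_exps e k = (if k < i then e k else if k < i + n then e i else e (k + 1 - n))"

definition inner_exps :: "(nat \<Rightarrow> nat) \<Rightarrow> nat \<Rightarrow> nat" where
  "inner_exps g k = (if i \<le> k \<and> k < i + n then g (k + 1 - i) else 0)"

lemma mon_comp_split: "mon_comp i n e g = (\<lambda>k. outer_exps e k + inner_exps g k)"
  by (auto simp: fun_eq_iff mon_comp_def outer_exps_def inner_exps_def)

lemma mon_comp_closed:
  assumes "e \<in> Mon m" "g \<in> Mon n"
  shows "mon_comp i n e g \<in> Mon (m + n - 1)"
proof -
  have e: "e j \<noteq> 0 \<Longrightarrow> j \<in> {1..m}" for j
    using assms(1) by (auto simp: Mon_def)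
  have "mon_comp i n e g k \<noteq> 0 \<Longrightarrow> k \<in> {1..m+n-1}" for k
    using n i im e[of k] e[of "k + 1 - n"] by (auto simp: mon_comp_def split: if_splits)
  then show ?thesis by (auto simp: Mon_def)
qed

lemma mon_to_rf_comp:
  assumes e: "e \<in> Mon m" and g: "g \<in> Mon n"
  shows "mon_to_rf (mon_comp i n e g)
         = rsubst (block_subst (ff_block i n)) (mon_to_rf e) * rsubst (block_subst (shift_blocks i)) (mon_to_rf g)"
proof -
  let ?N = "{1..m+n-1}"
  have "peval (block_subst (ff_block i n)) (mon_poly e {1..m})
        = mon_poly (outer_exps e) (block_union (ff_block i n) {1..m})"
    by (rule peval_block_mon_poly[OF disjoint_ff_block]) (use n in \<open>auto simp: ff_block_def outer_exps_def split: if_splits\<close>)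
  then have outer: "peval (block_subst (ff_block i n)) (mon_poly e {1..m}) = mon_poly (outer_exps e) ?N"
    by (simp only: block_union_ff_block)
  have "peval (block_subst (shift_blocks i)) (mon_poly g {1..n})
        = mon_poly (inner_exps g) (block_union (shift_blocks i) {1..n})"
    by (rule peval_block_mon_poly[OF disjoint_shift_blocks]) (use i in \<open>auto simp: inner_exps_def\<close>)
  also have "\<dots> = mon_poly (inner_exps g) ?N"
    unfolding block_union_shift_blocks mon_poly_def
    by (rule prod.mono_neutral_left) (use n i im in \<open>auto simp: inner_exps_def\<close>)
  finally have inner: "peval (block_subst (shift_blocks i)) (mon_poly g {1..n}) = mon_poly (inner_exps g) ?N" .
  have "mon_to_rf (mon_comp i n e g) = poly_to_rf (mon_poly (mon_comp i n e g) ?N)"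
    by (rule mon_to_rf_Mon[OF mon_comp_closed[OF e g]])
  also have "\<dots> = poly_to_rf (mon_poly (outer_exps e) ?N) * poly_to_rf (mon_poly (inner_exps g) ?N)"
    by (simp only: mon_comp_split mon_poly_add poly_to_rf_mult)
  also have "\<dots> = rsubst (block_subst (ff_block i n)) (mon_to_rf e)
                  * rsubst (block_subst (shift_blocks i)) (mon_to_rf g)"
    by (simp only: mon_to_rf_Mon[OF e] mon_to_rf_Mon[OF g] outer inner
        rsubst_poly[OF faithful_block_subst[OF disjoint_ff_block]]
        rsubst_poly[OF faithful_block_subst[OF disjoint_shift_blocks]])
  finally show ?thesis .
qed

lemma ff_comp_push:
  "ff_comp m i n F G = (\<lambda>T. ((if T = {i..i+n-1} then 1 else 0)
      + ff_push (\<lambda>S. S \<subseteq> {1..m}) (block_union (ff_block i n)) F T)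
      + ff_push (\<lambda>S. S \<subseteq> {1..n}) (block_union (shift_blocks i)) G T)"
  by (simp add: fun_eq_iff ff_comp_def ff_push_def block_union_singletons block_union_def)

lemma phi1_comp:
  assumes F: "F \<in> FF m" and G: "G \<in> FF n"
  shows "phi1 (ff_comp m i n F G)
         = bracket {i..i+n-1} * rsubst (block_subst (ff_block i n)) (phi1 F)
           * rsubst (block_subst (shift_blocks i)) (phi1 G)"
proof -
  define new where "new T = (if T = {i..i+n-1} then 1 else (0::int))" for T
  define pF where "pF = ff_push (\<lambda>S. S \<subseteq> {1..m}) (block_union (ff_block i n)) F"
  define pG where "pG = ff_push (\<lambda>S. S \<subseteq> {1..n}) (block_union (shift_blocks i)) G"
  have "{T. new T \<noteq> 0} = {{i..i+n-1}}"
    by (auto simp: new_def)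
  then have "finitary new" "phi1 new = bracket {i..i+n-1}"
    using n by (simp_all add: finitary_def phi1_def bracket_def var_prod_def new_def)
  moreover have "finitary pF"
    unfolding pF_def by (rule finitary_ff_push[OF disjoint_ff_block FF_finitary[OF F]])
  moreover have "phi1 pF = rsubst (block_subst (ff_block i n)) (phi1 F)"
    unfolding pF_def
    by (rule rsubst_block_phi1[OF disjoint_ff_block FF_finitary[OF F], symmetric])
       (use FF_support[OF F] in auto)
  moreover have "finitary pG"
    unfolding pG_def by (rule finitary_ff_push[OF disjoint_shift_blocks FF_finitary[OF G]])
  moreover have "phi1 pG = rsubst (block_subst (shift_blocks i)) (phi1 G)"
    unfolding pG_def
    by (rule rsubst_block_phi1[OF disjoint_shift_blocks FF_finitary[OF G], symmetric])
       (use FF_support[OF G] in auto)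
  moreover have "ff_comp m i n F G = (\<lambda>T. (new T + pF T) + pG T)"
    unfolding ff_comp_push new_def pF_def pG_def ..
  ultimately show ?thesis
    by (simp add: phi1_add finitary_add)
qed

lemma phiM_comp:
  assumes x: "x \<in> MFF m" and y: "y \<in> MFF n"
  shows "phiM (mff_comp m i n x y) = mould_comp i n (phiM x) (phiM y)"
proof -
  obtain e F g G where xy: "x = (e, F)" "y = (g, G)"
    and mem: "e \<in> Mon m" "F \<in> FF m" "g \<in> Mon n" "G \<in> FF n"
    using x y by (auto simp: MFF_def)
  note outer = rsubst_mult[OF faithful_block_subst[OF disjoint_ff_block]]
  note inner = rsubst_mult[OF faithful_block_subst[OF disjoint_shift_blocks]]
  have "phiM (mff_comp m i n x y) = mon_to_rf (mon_comp i n e g) * phi1 (ff_comp m i n F G)"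
    by (simp add: phiM_def mff_comp_def xy)
  also have "\<dots> = bracket {i..i+n-1} * rsubst (block_subst (ff_block i n)) (mon_to_rf e * phi1 F)
                   * rsubst (block_subst (shift_blocks i)) (mon_to_rf g * phi1 G)"
    by (simp only: mon_to_rf_comp phi1_comp mem outer inner mult_ac)
  also have "\<dots> = mould_comp i n (phiM x) (phiM y)"
    by (simp add: mould_comp_block_subst phiM_def xy)
  finally show ?thesis .
qed

end

context
  fixes n :: nat and \<pi> :: "nat \<Rightarrow> nat"
  assumes \<pi>: "\<pi> permutes {1..n}"
begin

lemma disjoint_perm_blocks: "disjoint_blocks (\<lambda>j. {\<pi> j})"
  by (rule disjoint_blocks_singletons[OF permutes_inj[OF \<pi>]])

lemma mon_act_closed: "e \<in> Mon n \<Longrightarrow> mon_act \<pi> e \<in> Mon n"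
  unfolding Mon_def mon_act_def
  using permutes_inv[OF \<pi>] permutes_in_image by fastforce

lemma mon_to_rf_act:
  assumes e: "e \<in> Mon n"
  shows "mon_to_rf (mon_act \<pi> e) = rsubst (block_subst (\<lambda>j. {\<pi> j})) (mon_to_rf e)"
proof -
  have "peval (block_subst (\<lambda>j. {\<pi> j})) (mon_poly e {1..n})
        = mon_poly (mon_act \<pi> e) (block_union (\<lambda>j. {\<pi> j}) {1..n})"
    by (rule peval_block_mon_poly[OF disjoint_perm_blocks])
       (simp_all add: mon_act_def permutes_inverses(2)[OF \<pi>])
  also have "block_union (\<lambda>j. {\<pi> j}) {1..n} = {1..n}"
    by (simp only: block_union_singletons permutes_image[OF \<pi>])
  finally show ?thesis
    by (simp add: mon_to_rf_Mon[OF e] mon_to_rf_Mon[OF mon_act_closed[OF e]] rsubst_poly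
        faithful_block_subst disjoint_perm_blocks)
qed

lemma ff_act_push: "ff_act \<pi> f = ff_push (\<lambda>_. True) (block_union (\<lambda>j. {\<pi> j})) f"
proof
  fix T
  let ?\<Phi> = "block_union (\<lambda>j. {\<pi> j})"
  have "ff_act \<pi> f T = f (inv \<pi> ` T)"
    by (simp add: ff_act_def)
  also have "\<dots> = ff_push (\<lambda>_. True) ?\<Phi> f (?\<Phi> (inv \<pi> ` T))"
    by (rule ff_push_inj[OF inj_block_union[OF disjoint_perm_blocks], symmetric]) simp
  also have "?\<Phi> (inv \<pi> ` T) = T"
    by (simp add: block_union_singletons image_comp permutes_inverses[OF \<pi>] comp_def)
  finally show "ff_act \<pi> f T = ff_push (\<lambda>_. True) ?\<Phi> f T" .
qed

lemma phiM_act: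
  assumes x: "x \<in> MFF n"
  shows "phiM (mff_act \<pi> x) = mould_act \<pi> (phiM x)"
proof -
  obtain e f where xe: "x = (e, f)" and mem: "e \<in> Mon n" "f \<in> FF n"
    using x by (auto simp: MFF_def)
  have "phi1 (ff_act \<pi> f) = rsubst (block_subst (\<lambda>j. {\<pi> j})) (phi1 f)"
    unfolding ff_act_push by (rule rsubst_block_phi1[OF disjoint_perm_blocks FF_finitary[OF mem(2)], symmetric]) simp
  then show ?thesis
    by (simp add: xe phiM_def mff_act_def mould_act_block_subst mon_to_rf_act mem
        rsubst_mult[OF faithful_block_subst[OF disjoint_perm_blocks]])
qed

end

section \<open>phi_M takes values in Mould_1(n)\<close>

lemma mpoly_vars_mult: "mpoly_vars (p * q) \<subseteq> mpoly_vars p \<union> mpoly_vars q"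
proof
  fix v assume "v \<in> mpoly_vars (p * q)"
  then obtain e where e: "e \<in> Poly_Mapping.keys (p * q)" "v \<in> Poly_Mapping.keys e"
    unfolding mpoly_vars_def by auto
  obtain a b where ab: "e = a + b" "a \<in> Poly_Mapping.keys p" "b \<in> Poly_Mapping.keys q"
    using keys_mult[of p q] e(1) by blast
  have "v \<in> Poly_Mapping.keys a \<union> Poly_Mapping.keys b"
    using keys_add[of a b] e(2) ab(1) by blast
  then show "v \<in> mpoly_vars p \<union> mpoly_vars q"
    using ab unfolding mpoly_vars_def by blast
qed

lemma mpoly_vars_diff: "mpoly_vars (p - q) \<subseteq> mpoly_vars p \<union> mpoly_vars q"
proof -
  have "Poly_Mapping.keys (p - q) \<subseteq> Poly_Mapping.keys p \<union> Poly_Mapping.keys q"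
    by (auto simp: in_keys_iff lookup_minus)
  then show ?thesis unfolding mpoly_vars_def by blast
qed

lemma mpoly_vars_prod: "mpoly_vars (prod f A) \<subseteq> (\<Union>x\<in>A. mpoly_vars (f x))"
  by (induction A rule: infinite_finite_induct)
     (use mpoly_vars_mult in \<open>fastforce simp: mpoly_vars_def\<close>)+

lemma mpoly_vars_power: "mpoly_vars (p ^ k) \<subseteq> mpoly_vars p"
  by (induction k) (use mpoly_vars_mult in \<open>fastforce simp: mpoly_vars_def\<close>)+

lemma mpoly_vars_Var: "mpoly_vars (Var j) = {j}"
  by (simp add: mpoly_vars_def Var_def)

lemma mpoly_vars_mon_poly: "mpoly_vars (mon_poly e A) \<subseteq> A"
  using mpoly_vars_prod[of "\<lambda>j. Var j ^ e j" A] mpoly_vars_power[of "Var _"]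
  unfolding mon_poly_def mpoly_vars_Var by blast

lemma mpoly_vars_bracket_poly: "mpoly_vars (var_prod T - 1) \<subseteq> T"
proof -
  have "mpoly_vars (var_prod T) \<subseteq> T"
    using mpoly_vars_prod[of Var T] by (simp add: var_prod_def mpoly_vars_Var)
  moreover have "mpoly_vars (1::mpoly) = {}"
    by (simp add: mpoly_vars_def)
  ultimately show ?thesis
    using mpoly_vars_diff[of "var_prod T" 1] by blast
qed

lemma Mould1_poly: "mpoly_vars p \<subseteq> {1..n} \<Longrightarrow> poly_to_rf p \<in> Mould1 n"
  unfolding Mould1_def poly_to_rf_def
  by (intro CollectI exI[of _ p] exI[of _ 1]) (simp add: mpoly_vars_def)

lemma Mould1_one: "1 \<in> Mould1 n"
  using Mould1_poly[of 1 n] by (simp add: mpoly_vars_def poly_to_rf_def One_fract_def)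

lemma Mould1_mult: "x \<in> Mould1 n \<Longrightarrow> y \<in> Mould1 n \<Longrightarrow> x * y \<in> Mould1 n"
  unfolding Mould1_def
proof (elim CollectE exE conjE, intro CollectI)
  fix p q p' q'
  assume "q \<noteq> 0" "mpoly_vars p \<subseteq> {1..n}" "mpoly_vars q \<subseteq> {1..n}" "x = Fract p q"
    "q' \<noteq> 0" "mpoly_vars p' \<subseteq> {1..n}" "mpoly_vars q' \<subseteq> {1..n}" "y = Fract p' q'"
  then show "\<exists>p q. q \<noteq> 0 \<and> mpoly_vars p \<subseteq> {1..n} \<and> mpoly_vars q \<subseteq> {1..n} \<and> x * y = Fract p q"
    using mpoly_vars_mult[of p p'] mpoly_vars_mult[of q q']
    by (intro exI[of _ "p * p'"] exI[of _ "q * q'"]) auto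
qed

lemma Mould1_inverse: "x \<in> Mould1 n \<Longrightarrow> inverse x \<in> Mould1 n"
  unfolding Mould1_def
proof (elim CollectE exE conjE, intro CollectI)
  fix p q
  assume pq: "q \<noteq> 0" "mpoly_vars p \<subseteq> {1..n}" "mpoly_vars q \<subseteq> {1..n}" "x = Fract p q"
  show "\<exists>p q. q \<noteq> 0 \<and> mpoly_vars p \<subseteq> {1..n} \<and> mpoly_vars q \<subseteq> {1..n} \<and> inverse x = Fract p q"
  proof (cases "p = 0")
    case True
    then show ?thesis
      using pq by (intro exI[of _ 0] exI[of _ 1]) (simp add: eq_fract(2) mpoly_vars_def)
  next
    case False
    then show ?thesis using pq by (intro exI[of _ q] exI[of _ p]) simp
  qed
qed

lemma Mould1_powi: "x \<in> Mould1 n \<Longrightarrow> x powi k \<in> Mould1 n"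
proof -
  assume x: "x \<in> Mould1 n"
  have "y ^ l \<in> Mould1 n" if "y \<in> Mould1 n" for y l
    by (induction l) (use that in \<open>auto intro: Mould1_mult Mould1_one\<close>)
  then show ?thesis
    using x by (simp add: power_int_def Mould1_inverse)
qed

lemma Mould1_prod: "(\<And>a. a \<in> A \<Longrightarrow> f a \<in> Mould1 n) \<Longrightarrow> prod f A \<in> Mould1 n"
  by (induction A rule: infinite_finite_induct) (auto intro: Mould1_mult Mould1_one)

lemma phiM_Mould1:
  assumes x: "x \<in> MFF n"
  shows "phiM x \<in> Mould1 n"
proof -
  obtain e f where xe: "x = (e, f)" and mem: "e \<in> Mon n" "f \<in> FF n"
    using x by (auto simp: MFF_def)
  have "bracket S \<in> Mould1 n" if "f S \<noteq> 0" for S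
    unfolding bracket_def
    using mpoly_vars_bracket_poly[of S] FF_support[OF mem(2) that]
    by (intro Mould1_poly) blast
  then have "phi1 f \<in> Mould1 n"
    unfolding phi1_superset[OF FF_finite_support[OF mem(2)] subset_refl]
    by (intro Mould1_prod Mould1_powi) simp
  moreover have "mon_to_rf e \<in> Mould1 n"
    using mpoly_vars_mon_poly by (simp add: mon_to_rf_Mon[OF mem(1)] Mould1_poly)
  ultimately show ?thesis
    by (simp add: xe phiM_def Mould1_mult)
qed

section \<open>phi_M is injective\<close>

text \<open>Weights 2^(2^j): by uniqueness of binary expansions, a finite set U is
  determined by the product of the weights of its elements.\<close>

definition weight_prod :: "nat set \<Rightarrow> rat" where
  "weight_prod U = (\<Prod>j\<in>U. 2 ^ (2 ^ j))"

lemma weight_prod_set_encode: "weight_prod U = 2 ^ set_encode U"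
  by (simp add: weight_prod_def set_encode_def power_sum)

lemma weight_prod_pos: "weight_prod U > 0"
  by (simp add: weight_prod_set_encode)

lemma weight_prod_inj: "finite U \<Longrightarrow> finite V \<Longrightarrow> weight_prod U = weight_prod V \<Longrightarrow> U = V"
  by (simp add: weight_prod_set_encode power_inject_exp set_encode_eq)

lemma weight_prod_neq_one: "finite U \<Longrightarrow> U \<noteq> {} \<Longrightarrow> weight_prod U \<noteq> 1"
  using weight_prod_inj[of U "{}"] by (auto simp: weight_prod_def)

text \<open>The image of [T] is linear with root 1/weight_prod (T - {j0})
  if j0 : T, and a nonzero constant otherwise.\<close>

definition spec :: "nat \<Rightarrow> nat \<Rightarrow> rat poly" where
  "spec j0 j = (if j = j0 then [:0, 1:] else [:2 ^ (2 ^ j):])"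

abbreviation spec_eval :: "nat \<Rightarrow> mpoly \<Rightarrow> rat poly" where
  "spec_eval j0 \<equiv> geval (\<lambda>c. [:c:]) (spec j0)"

definition spec_root :: "nat set \<Rightarrow> nat \<Rightarrow> rat" where
  "spec_root S j0 = inverse (weight_prod (S - {j0}))"

lemmas spec_eval_mult = geval_mult[OF rat_hom_const_poly]
  and spec_eval_power = geval_power[OF rat_hom_const_poly]
  and spec_eval_prod = geval_prod[OF rat_hom_const_poly]

lemma const_poly_prod: "(\<Prod>j\<in>U. [:f j:]) = [:\<Prod>j\<in>U. f j:]"
  by (induction U rule: infinite_finite_induct) (auto simp: mult.commute)

lemma spec_eval_var_prod:
  assumes T: "finite T"
  shows "spec_eval j0 (var_prod T)
         = (if j0 \<in> T then [:0, weight_prod (T - {j0}):] else [:weight_prod T:])"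
proof -
  have constants: "(\<Prod>j\<in>U. spec j0 j) = [:weight_prod U:]" if "j0 \<notin> U" for U
  proof -
    have "(\<Prod>j\<in>U. spec j0 j) = (\<Prod>j\<in>U. [:2 ^ (2 ^ j):])"
      by (rule prod.cong) (use that in \<open>auto simp: spec_def\<close>)
    then show ?thesis by (simp add: const_poly_prod weight_prod_def)
  qed
  have "spec_eval j0 (var_prod T) = (\<Prod>j\<in>T. spec j0 j)"
    by (simp add: var_prod_def spec_eval_prod geval_Var[OF rat_hom_const_poly])
  also have "\<dots> = (if j0 \<in> T then [:0, 1:] * (\<Prod>j\<in>T - {j0}. spec j0 j) else \<Prod>j\<in>T. spec j0 j)"
    using T by (simp add: prod.remove spec_def)
  also have "\<dots> = (if j0 \<in> T then [:0, weight_prod (T - {j0}):] else [:weight_prod T:])"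
    by (simp add: constants)
  finally show ?thesis .
qed

lemma spec_eval_bracket:
  assumes "finite T"
  shows "spec_eval j0 (var_prod T - 1) =
    (if j0 \<in> T then smult (weight_prod (T - {j0})) [:- spec_root T j0, 1:] else [:weight_prod T - 1:])"
  using assms weight_prod_pos[of "T - {j0}"]
  by (simp add: geval_diff[OF rat_hom_const_poly] geval_one[OF rat_hom_const_poly]
      spec_eval_var_prod one_pCons spec_root_def)

lemma spec_eval_bracket_nonzero:
  "finite T \<Longrightarrow> T \<noteq> {} \<Longrightarrow> spec_eval j0 (var_prod T - 1) \<noteq> 0"
  using weight_prod_pos[of "T - {j0}"] weight_prod_neq_one[of T]
  by (auto simp: spec_eval_bracket)

lemma order_spec_eval_bracket:
  assumes S: "finite S" and j0: "j0 \<in> S" and T: "finite T" "T \<noteq> {}"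
  shows "order (spec_root S j0) (spec_eval j0 (var_prod T - 1)) = (if T = S then 1 else 0)"
proof (cases "j0 \<in> T")
  case True
  have "order (spec_root S j0) (spec_eval j0 (var_prod T - 1)) = order (spec_root S j0) [:- spec_root T j0, 1:]"
    using weight_prod_pos[of "T - {j0}"]
    by (simp only: spec_eval_bracket[OF T(1)] if_P[OF True] order_smult)
  also have "\<dots> = (if T = S then 1 else 0)"
  proof (cases "T = S")
    case True
    then show ?thesis using order_power_n_n[of "spec_root S j0" 1] by simp
  next
    case False
    then have "T - {j0} \<noteq> S - {j0}" using \<open>j0 \<in> T\<close> j0 by blast
    then have "spec_root T j0 \<noteq> spec_root S j0"
      using weight_prod_inj[of "T - {j0}" "S - {j0}"] T S by (auto simp: spec_root_def)
    then show ?thesis using False by (simp add: order_0I)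
  qed
  finally show ?thesis .
next
  case False
  then have "T \<noteq> S" using j0 by blast
  moreover have "weight_prod T \<noteq> 1" using weight_prod_neq_one T by blast
  ultimately show ?thesis using False T by (simp add: spec_eval_bracket order_0I)
qed

lemma spec_eval_mon_poly_no_root: "poly (spec_eval j0 (mon_poly e A)) (spec_root S j0) \<noteq> 0"
proof -
  have "spec_eval j0 (mon_poly e A) = (\<Prod>j\<in>A. spec j0 j ^ e j)"
    by (simp add: mon_poly_def spec_eval_prod spec_eval_power geval_Var[OF rat_hom_const_poly])
  moreover have "poly (spec j0 j) (spec_root S j0) \<noteq> 0" for j
    using weight_prod_pos[of "S - {j0}"] by (simp add: spec_def spec_root_def)
  ultimately show ?thesis by (cases "finite A") (simp_all add: poly_prod prod_zero_iff)
qed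

definition nonempty_subsets :: "nat \<Rightarrow> nat set set" where
  "nonempty_subsets n = {T. T \<subseteq> {1..n} \<and> T \<noteq> {}}"

definition bracket_prod :: "nat \<Rightarrow> (nat set \<Rightarrow> nat) \<Rightarrow> mpoly" where
  "bracket_prod n k = (\<Prod>T\<in>nonempty_subsets n. (var_prod T - 1) ^ k T)"

lemma nonempty_subsets_finite: "finite (nonempty_subsets n)"
  by (rule finite_subset[of _ "Pow {1..n}"]) (auto simp: nonempty_subsets_def)

lemma nonempty_subsets_mem: "T \<in> nonempty_subsets n \<Longrightarrow> finite T \<and> T \<noteq> {}"
  by (auto simp: nonempty_subsets_def intro: finite_subset)

lemma bracket_prod_nonzero: "bracket_prod n k \<noteq> 0"
  using var_prod_neq_one nonempty_subsets_mem nonempty_subsets_finite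
  by (auto simp: bracket_prod_def prod_zero_iff)

lemma prod_Fract:
  "finite A \<Longrightarrow> (\<And>x. x \<in> A \<Longrightarrow> b x \<noteq> 0) \<Longrightarrow>
    (\<Prod>x\<in>A. Fract (a x) (b x)) = Fract (\<Prod>x\<in>A. a x) (\<Prod>x\<in>A. b x)"
  by (induction A rule: finite_induct) (simp_all add: One_fract_def)

lemma phi1_Fract:
  assumes f: "f \<in> FF n"
  shows "phi1 f = Fract (bracket_prod n (\<lambda>T. nat (f T))) (bracket_prod n (\<lambda>T. nat (- f T)))"
proof -
  have nonzero: "var_prod T - 1 \<noteq> 0" if "T \<in> nonempty_subsets n" for T
    using var_prod_neq_one nonempty_subsets_mem[OF that] by force
  have "phi1 f = (\<Prod>T\<in>nonempty_subsets n. bracket T powi f T)"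
    by (rule phi1_superset[OF nonempty_subsets_finite])
       (use FF_support[OF f] in \<open>auto simp: nonempty_subsets_def\<close>)
  also have "\<dots> = (\<Prod>T\<in>nonempty_subsets n.
      Fract ((var_prod T - 1) ^ nat (f T)) ((var_prod T - 1) ^ nat (- f T)))"
  proof (rule prod.cong[OF refl])
    fix T assume "T \<in> nonempty_subsets n"
    have "Fract p q ^ k = Fract (p ^ k) (q ^ k)" for p q :: mpoly and k
      by (induction k) (simp_all add: One_fract_def)
    then show "bracket T powi f T = Fract ((var_prod T - 1) ^ nat (f T)) ((var_prod T - 1) ^ nat (- f T))"
      using nonzero[OF \<open>T \<in> _\<close>]
      by (cases "f T \<ge> 0") (simp_all add: bracket_def poly_to_rf_def power_int_def)
  qed
  also have "\<dots> = Fract (bracket_prod n (\<lambda>T. nat (f T))) (bracket_prod n (\<lambda>T. nat (- f T)))"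
    unfolding bracket_prod_def
    by (rule prod_Fract[OF nonempty_subsets_finite]) (rule power_not_zero[OF nonzero])
  finally show ?thesis .
qed

lemma order_prod_power:
  fixes p :: "'b \<Rightarrow> rat poly"
  assumes "finite A" "\<And>T. T \<in> A \<Longrightarrow> p T \<noteq> 0"
  shows "order r (\<Prod>T\<in>A. p T ^ k T) = (\<Sum>T\<in>A. k T * order r (p T))"
  using assms
proof (induction A rule: finite_induct)
  case (insert x A)
  have "(\<Prod>T\<in>A. p T ^ k T) \<noteq> 0" "p x ^ k x \<noteq> 0"
    using insert by (simp_all add: prod_zero_iff)
  moreover have "order r (p x ^ l) = l * order r (p x)" if "p x \<noteq> 0" for l :: nat
    using that by (induction l) (simp_all add: order_mult)
  ultimately show ?case using insert by (simp add: order_mult)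
qed simp

lemma order_spec_eval_bracket_prod:
  assumes S: "S \<in> nonempty_subsets n" and j0: "j0 \<in> S"
  shows "spec_eval j0 (bracket_prod n k) \<noteq> 0"
    and "order (spec_root S j0) (spec_eval j0 (bracket_prod n k)) = k S"
proof -
  have fin: "finite S" using nonempty_subsets_mem[OF S] by simp
  have eval: "spec_eval j0 (bracket_prod n k) = (\<Prod>T\<in>nonempty_subsets n. spec_eval j0 (var_prod T - 1) ^ k T)"
    by (simp add: bracket_prod_def spec_eval_prod spec_eval_power)
  have nonzero: "spec_eval j0 (var_prod T - 1) \<noteq> 0" if "T \<in> nonempty_subsets n" for T
    using spec_eval_bracket_nonzero nonempty_subsets_mem[OF that] by blast
  show "spec_eval j0 (bracket_prod n k) \<noteq> 0"
    unfolding eval using nonzero nonempty_subsets_finite by (simp add: prod_zero_iff)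
  have "order (spec_root S j0) (spec_eval j0 (bracket_prod n k))
        = (\<Sum>T\<in>nonempty_subsets n. k T * order (spec_root S j0) (spec_eval j0 (var_prod T - 1)))"
    unfolding eval by (rule order_prod_power[OF nonempty_subsets_finite nonzero])
  also have "\<dots> = (\<Sum>T\<in>nonempty_subsets n. if T = S then k T else 0)"
    by (rule sum.cong[OF refl])
       (simp add: order_spec_eval_bracket[OF fin j0] nonempty_subsets_mem)
  also have "\<dots> = k S" using S nonempty_subsets_finite by simp
  finally show "order (spec_root S j0) (spec_eval j0 (bracket_prod n k)) = k S" .
qed

text \<open>Clearing denominators in phi_M(m, f) = phi_M(m', f') determines the exponents of
  the formal fraction: comparing root multiplicities gives max(f S,0) + max(-f' S,0) =
  max(f' S,0) + max(-f S,0).\<close>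
lemma FF_exponents_determined:
  assumes f: "f \<in> FF n" and f': "f' \<in> FF n"
    and eq: "mon_poly e A * bracket_prod n (\<lambda>T. nat (f T)) * bracket_prod n (\<lambda>T. nat (- f' T))
           = mon_poly e' A * bracket_prod n (\<lambda>T. nat (f' T)) * bracket_prod n (\<lambda>T. nat (- f T))"
  shows "f = f'"
proof
  fix S
  show "f S = f' S"
  proof (cases "S \<in> nonempty_subsets n")
    case False
    then have "f S = 0" "f' S = 0"
      using FF_support[OF f, of S] FF_support[OF f', of S] unfolding nonempty_subsets_def by blast+
    then show ?thesis by simp
  next
    case True
    then obtain j0 where j0: "j0 \<in> S" by (auto simp: nonempty_subsets_def)
    have order_eq: "order (spec_root S j0) (spec_eval j0 (mon_poly e A * bracket_prod n k * bracket_prod n l))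
                    = k S + l S" for e k l
    proof -
      note brackets = order_spec_eval_bracket_prod[OF True j0]
      have no_root: "poly (spec_eval j0 (mon_poly e A)) (spec_root S j0) \<noteq> 0"
        by (rule spec_eval_mon_poly_no_root)
      then have "spec_eval j0 (mon_poly e A) \<noteq> 0" by auto
      then show ?thesis
        using brackets order_0I[OF no_root] by (simp add: spec_eval_mult order_mult)
    qed
    from arg_cong[OF eq, of "\<lambda>p. order (spec_root S j0) (spec_eval j0 p)"]
    have "nat (f S) + nat (- f' S) = nat (f' S) + nat (- f S)"
      by (simp only: order_eq)
    then show ?thesis by linarith
  qed
qed

lemma mon_poly_determines_exps:
  assumes "mon_poly e A = mon_poly e' A" "finite A" "j \<in> A"
  shows "e j = e' j"
proof -
  have "(\<Sum>k\<in>A. Poly_Mapping.single k (e k)) = (\<Sum>k\<in>A. Poly_Mapping.single k (e' k))"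
    using assms(1) unfolding mon_poly_eq_single
    by (metis lookup_single_eq lookup_single_not_eq zero_neq_one)
  then have "Poly_Mapping.lookup (\<Sum>k\<in>A. Poly_Mapping.single k (e k)) j
           = Poly_Mapping.lookup (\<Sum>k\<in>A. Poly_Mapping.single k (e' k)) j"
    by simp
  then show ?thesis
    using assms(2,3) by (simp add: lookup_sum lookup_single when_def)
qed

text \<open>Injectivity: cross-multiplying phi_M x = phi_M y first determines the formal
  fraction, and after cancelling the brackets also the monomial.\<close>
lemma inj_phiM: "inj_on phiM (MFF n)"
proof (rule inj_onI)
  fix x y assume x: "x \<in> MFF n" and y: "y \<in> MFF n" and eq: "phiM x = phiM y"
  obtain e f where xe: "x = (e, f)" "e \<in> Mon n" "f \<in> FF n" using x by (auto simp: MFF_def)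
  obtain e' f' where ye: "y = (e', f')" "e' \<in> Mon n" "f' \<in> FF n" using y by (auto simp: MFF_def)
  let ?pos = "\<lambda>f. bracket_prod n (\<lambda>T. nat (f T))" and ?neg = "\<lambda>f. bracket_prod n (\<lambda>T. nat (- f T))"
  have fraction: "phiM (m, g) = Fract (mon_poly m {1..n} * ?pos g) (?neg g)"
    if "m \<in> Mon n" "g \<in> FF n" for m g
    using that by (simp add: phiM_def mon_to_rf_Mon phi1_Fract poly_to_rf_def bracket_prod_nonzero)
  have cross: "mon_poly e {1..n} * ?pos f * ?neg f' = mon_poly e' {1..n} * ?pos f' * ?neg f"
    using eq fraction[OF xe(2,3)] fraction[OF ye(2,3)] xe(1) ye(1)
    by (simp only: eq_fract(1)[OF bracket_prod_nonzero bracket_prod_nonzero])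
  have ff: "f = f'"
    by (rule FF_exponents_determined[OF xe(3) ye(3) cross])
  then have monomials: "mon_poly e {1..n} = mon_poly e' {1..n}"
    using cross bracket_prod_nonzero by (simp add: mult.assoc)
  have "e = e'"
  proof
    fix j
    show "e j = e' j"
    proof (cases "j \<in> {1..n}")
      case True
      then show ?thesis by (rule mon_poly_determines_exps[OF monomials finite_atLeastAtMost])
    next
      case False
      then have "e j = 0" "e' j = 0" using xe(2) ye(2) unfolding Mon_def by blast+
      then show ?thesis by simp
    qed
  qed
  then show "x = y" using xe ye ff by simp
qed

theorem mainTheorem17:
  shows "(\<forall>n\<ge>1. phiM ` MFF n \<subseteq> Mould1 n \<and> inj_on phiM (MFF n))
       \<and> phiM mff_unit = mould_unit
       \<and> (\<forall>m n i x y. 1 \<le> n \<longrightarrow> 1 \<le> i \<longrightarrow> i \<le> m \<longrightarrow> x \<in> MFF m \<longrightarrow> y \<in> MFF n \<longrightarrow>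
            phiM (mff_comp m i n x y) = mould_comp i n (phiM x) (phiM y))
       \<and> (\<forall>n \<sigma> x. 1 \<le> n \<longrightarrow> \<sigma> permutes {1..n} \<longrightarrow> x \<in> MFF n \<longrightarrow>
            phiM (mff_act \<sigma> x) = mould_act \<sigma> (phiM x))"
  using phiM_Mould1 inj_phiM phiM_unit phiM_comp phiM_act by blast

end
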